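(* Let $N\ge 1$ and $M\ge 1$ be integers. There exists a finite set of $M$-mode linear optical interferometer configurations $g_1,\dots,g_R\in \mathrm{U}(M)$ with $$R<\binom{N+M^2-1}{N}^2$$ such that every $N$-photon, $M$-mode state $\rho$ can be reconstructed from the photon-counting outcome probabilities $p_{\nu,g_j}=\langle \nu|U(g_j)^\dagger\rho\, U(g_j)|\nu\rangle$, $j=1,\dots,R$, $\nu$ ranging over all $M$-mode Fock states with $N$ photons; i.e. these probabilities determine $\rho$ uniquely.
   Context: Let $a_1,\dots,a_M$ be bosonic annihilation operators of $M$ optical modes. An $N$-photon, $M$-mode state is a density operator $\rho$ on the space $\mathcal H_{N,M}$ spanned by the Fock states $|\nu\rangle=|k_1,\dots,k_M\rangle$ with $k_j\ge 0$ and $\sum_j k_j=N$; $\dim\mathcal H_{N,M}=\binom{N+M-1}{N}$. A configuration of an $M$-mode linear optical interferometer (beam splitters and phase shifters) is a unitary $g=e^{iH}\in\mathrm U(M)$, $H$ an $M\times M$ Hermitian matrix, acting on the Fock space via $U(g)=\exp\!\big(i\sum_{k,l}H_{kl}a_k^\dagger a_l\big)$. Photon counting after configuration $g$ yields outcome $\nu$ (a Fock state with $N$ photons) with probability $p_{\nu,g}=\langle\nu|U(g)^\dagger\rho\,U(g)|\nu\rangle$. Reconstruction with configurations $g_1,\dots,g_R$ means the map $\rho\mapsto(p_{\nu,g_j})_{\nu,j}$ is injective (equivalently, the associated linear system has a unique solution $\rho$). *)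

theory Defs
  imports Complex_Main "HOL-Library.FuncSet"
begin

text \<open>Modes are indexed by 0..<M. An M-mode Fock state with N photons is an
occupation function k :: nat => nat, zero outside 0..<M, with total N.\<close>

definition fock :: "nat \<Rightarrow> nat \<Rightarrow> (nat \<Rightarrow> nat) set" where
  "fock N M = {k. (\<forall>j\<ge>M. k j = 0) \<and> (\<Sum>j<M. k j) = N}"

definition unitary_mat :: "nat \<Rightarrow> (nat \<Rightarrow> nat \<Rightarrow> complex) \<Rightarrow> bool" where
  "unitary_mat M g \<longleftrightarrow>
     (\<forall>i<M. \<forall>j<M. (\<Sum>k<M. cnj (g k i) * g k j) = (if i = j then 1 else 0))"

definition fock_fact :: "nat \<Rightarrow> (nat \<Rightarrow> nat) \<Rightarrow> real" where
  "fock_fact M k = (\<Prod>l<M. fact (k l))"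

definition mode_list :: "nat \<Rightarrow> (nat \<Rightarrow> nat) \<Rightarrow> nat list" where
  "mode_list M k = concat (map (\<lambda>l. replicate (k l) l) [0..<M])"

definition occ :: "nat \<Rightarrow> (nat \<Rightarrow> nat) \<Rightarrow> (nat \<Rightarrow> nat)" where
  "occ N f = (\<lambda>k. card {j\<in>{0..<N}. f j = k})"

text \<open>Matrix element <mu| U(g) |nu> of the Fock-space unitary
  U(g) = exp(i sum_{k,l} H_{kl} a_k^dagger a_l), g = exp(i H).
  It is characterised by U(g) a_l^dagger U(g)^dagger = sum_k g_{kl} a_k^dagger,
  U(g)|0> = |0>, so
  U(g)|nu> = (nu!)^(-1/2) prod_l (sum_k g_{kl} a_k^dagger)^(nu_l) |0>;
  expanding the product over the N photons (photon j sits in mode c_j) gives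
  the formula below, using (a^dagger)^{mu}|0> = sqrt(mu!) |mu>.\<close>

definition fock_amp :: "nat \<Rightarrow> nat \<Rightarrow> (nat \<Rightarrow> nat \<Rightarrow> complex) \<Rightarrow> (nat \<Rightarrow> nat) \<Rightarrow> (nat \<Rightarrow> nat) \<Rightarrow> complex" where
  "fock_amp N M g mu nu =
     complex_of_real (sqrt (fock_fact M mu) / sqrt (fock_fact M nu)) *
     (\<Sum>f\<in>{f\<in>{0..<N} \<rightarrow>\<^sub>E {0..<M}. occ N f = mu}.
        \<Prod>j<N. g (f j) (mode_list M nu ! j))"

definition density_op :: "nat \<Rightarrow> nat \<Rightarrow> ((nat \<Rightarrow> nat) \<Rightarrow> (nat \<Rightarrow> nat) \<Rightarrow> complex) \<Rightarrow> bool" where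
  "density_op N M \<rho> \<longleftrightarrow>
     (\<forall>mu mu'. (mu \<notin> fock N M \<or> mu' \<notin> fock N M) \<longrightarrow> \<rho> mu mu' = 0) \<and>
     (\<forall>mu mu'. \<rho> mu' mu = cnj (\<rho> mu mu')) \<and>
     (\<forall>v :: (nat \<Rightarrow> nat) \<Rightarrow> complex.
        0 \<le> Re (\<Sum>mu\<in>fock N M. \<Sum>mu'\<in>fock N M. cnj (v mu) * \<rho> mu mu' * v mu')) \<and>
     (\<Sum>mu\<in>fock N M. \<rho> mu mu) = 1"

definition outcome_prob :: "nat \<Rightarrow> nat \<Rightarrow> ((nat \<Rightarrow> nat) \<Rightarrow> (nat \<Rightarrow> nat) \<Rightarrow> complex) \<Rightarrow> (nat \<Rightarrow> nat \<Rightarrow> complex) \<Rightarrow> (nat \<Rightarrow> nat) \<Rightarrow> complex" where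
  "outcome_prob N M \<rho> g nu =
     (\<Sum>mu\<in>fock N M. \<Sum>mu'\<in>fock N M.
        cnj (fock_amp N M g mu nu) * \<rho> mu mu' * fock_amp N M g mu' nu)"

definition reconstructs :: "nat \<Rightarrow> nat \<Rightarrow> (nat \<Rightarrow> nat \<Rightarrow> complex) list \<Rightarrow> bool" where
  "reconstructs N M gs \<longleftrightarrow>
     (\<forall>\<rho>1 \<rho>2. density_op N M \<rho>1 \<longrightarrow> density_op N M \<rho>2 \<longrightarrow>
        (\<forall>j<length gs. \<forall>nu\<in>fock N M. outcome_prob N M \<rho>1 (gs ! j) nu = outcome_prob N M \<rho>2 (gs ! j) nu) \<longrightarrow>
        \<rho>1 = \<rho>2)"

end

theory Submission
  imports Defs "HOL-Library.Function_Algebras"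
begin

(* Look only at the outcome in which all N photons leave in mode 0. Its probability
   after the configuration g is a Hermitian form in the degree-N monomials of the first
   column x of g, with the entries of rho as coefficients and positive weights. Every
   unit vector is the first column of a unitary matrix and the form is homogeneous, so
   these probabilities over all of U(M) determine the form on all of C^M; along the
   curve x_l = z ^ (N + 1) ^ l it becomes a polynomial in z and cnj z whose monomials
   are distinct for distinct pairs of Fock states, hence it determines rho.
   The probabilities are linear functionals of rho in a space of dimension d^2, where
   d = card (fock N M) = (N + M - 1 choose N), so some d^2 configurations already
   determine all of them, and d^2 < (N + M^2 - 1 choose N)^2 once M >= 2. For M = 1 the
   state space is a single point and no configuration is needed. *)

section \<open>Polynomials in \<open>z\<close> and \<open>cnj z\<close>\<close>

lemma grouped_coeffs_eq_0_if_infinite_roots: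
  fixes C :: "'k \<Rightarrow> 'a::{idom,real_normed_div_algebra}" and e :: "'k \<Rightarrow> nat"
  assumes fin: "finite I" and inf: "infinite X"
    and roots: "\<forall>x\<in>X. (\<Sum>k\<in>I. C k * x ^ e k) = 0"
  shows "(\<Sum>k\<in>{k\<in>I. e k = m}. C k) = 0"
proof (rule ccontr)
  assume nz: "(\<Sum>k\<in>{k\<in>I. e k = m}. C k) \<noteq> 0"
  define n where "n = (\<Sum>k\<in>I. e k)"
  have e_le: "e k \<le> n" if "k \<in> I" for k
    unfolding n_def using fin that by (intro member_le_sum) auto
  define c where "c i = (\<Sum>k\<in>{k\<in>I. e k = i}. C k)" for i
  have grouped: "(\<Sum>k\<in>I. C k * x ^ e k) = (\<Sum>i\<le>n. c i * x ^ i)" for x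
  proof -
    have "(\<Sum>k\<in>I. C k * x ^ e k) = (\<Sum>i\<le>n. \<Sum>k\<in>{k\<in>I. e k = i}. C k * x ^ e k)"
      using e_le by (intro sum.group[symmetric] fin) auto
    also have "\<dots> = (\<Sum>i\<le>n. c i * x ^ i)"
      unfolding c_def by (intro sum.cong refl) (auto simp: sum_distrib_right)
    finally show ?thesis .
  qed
  have "m \<le> n"
    using nz e_le by (metis (mono_tags, lifting) empty_Collect_eq sum.empty)
  then have "finite {x. (\<Sum>i\<le>n. c i * x ^ i) = 0}"
    using nz by (intro polyfun_roots_finite[of c m]) (auto simp: c_def)
  moreover have "X \<subseteq> {x. (\<Sum>i\<le>n. c i * x ^ i) = 0}"
    using roots grouped by auto
  ultimately show False
    using inf finite_subset by blast
qed

lemma infinite_unit_circle: "infinite {w::complex. cmod w = 1}"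
proof
  assume "finite {w::complex. cmod w = 1}"
  then have "finite (Re ` {w::complex. cmod w = 1})" by simp
  moreover have "{-1..1} \<subseteq> Re ` {w::complex. cmod w = 1}"
  proof
    fix a :: real
    assume "a \<in> {-1..1}"
    then have "cmod (Complex a (sqrt (1 - a\<^sup>2))) = 1"
      by (simp add: cmod_def abs_square_le_1 abs_le_iff)
    then show "a \<in> Re ` {w. cmod w = 1}"
      by (intro image_eqI[of _ _ "Complex a (sqrt (1 - a\<^sup>2))"]) auto
  qed
  moreover have "infinite {-1..1::real}"
    by simp
  ultimately show False
    using finite_subset by blast
qed

lemma infinite_positive_reals: "infinite (complex_of_real ` {0<..})"
  using infinite_Ioi[of "0::real"] by (auto dest: finite_imageD simp: inj_on_def)

text \<open>Writing \<open>z = r w\<close> with \<open>r > 0\<close> and \<open>cmod w = 1\<close>, the term indexed by \<open>k\<close>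
  becomes \<open>r ^ (i k + j k) * w ^ (j k - i k)\<close>; after multiplying by a large power of \<open>w\<close>
  these are two independent polynomial variables, and \<open>(j k - i k, i k + j k)\<close>
  determines \<open>(i k, j k)\<close>.\<close>

lemma coeffs_eq_0_if_sum_cnj_pow_pow_eq_0:
  fixes C :: "'k \<Rightarrow> complex" and i j :: "'k \<Rightarrow> nat"
  assumes fin: "finite I" and inj: "inj_on (\<lambda>k. (i k, j k)) I"
    and vanish: "\<And>z. z \<noteq> 0 \<Longrightarrow> (\<Sum>k\<in>I. C k * cnj z ^ i k * z ^ j k) = 0"
    and k0: "k0 \<in> I"
  shows "C k0 = 0"
proof -
  define n where "n = (\<Sum>k\<in>I. i k)"
  have i_le: "i k \<le> n" if "k \<in> I" for k
    unfolding n_def using fin that by (intro member_le_sum) auto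
  define e where "e k = n - i k + j k" for k
  have circle: "(\<Sum>k\<in>{k\<in>I. e k = m}. C k * complex_of_real r ^ (i k + j k)) = 0"
    if r: "r > 0" for r m
  proof (rule grouped_coeffs_eq_0_if_infinite_roots[OF fin infinite_unit_circle], intro ballI)
    fix w :: complex
    assume "w \<in> {w. cmod w = 1}"
    then have w_cnj: "w * cnj w = 1"
      by (simp add: complex_norm_square[symmetric])
    have term_eq: "w ^ n * (C k * cnj (r * w) ^ i k * (r * w) ^ j k)
        = C k * complex_of_real r ^ (i k + j k) * w ^ e k" if "k \<in> I" for k
    proof -
      have "w ^ n = w ^ (n - i k) * w ^ i k"
        using i_le[OF that] by (simp add: power_add[symmetric])
      then have "w ^ n * (C k * cnj (r * w) ^ i k * (r * w) ^ j k)
          = C k * r ^ (i k + j k) * w ^ (n - i k) * (w * cnj w) ^ i k * w ^ j k"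
        by (simp add: power_add power_mult_distrib mult_ac)
      then show ?thesis
        by (simp add: w_cnj e_def power_add)
    qed
    have "r * w \<noteq> 0"
      using r w_cnj by auto
    have "(\<Sum>k\<in>I. C k * complex_of_real r ^ (i k + j k) * w ^ e k)
        = w ^ n * (\<Sum>k\<in>I. C k * cnj (r * w) ^ i k * (r * w) ^ j k)"
      unfolding sum_distrib_left by (intro sum.cong refl) (simp only: term_eq)
    also have "\<dots> = 0"
      using vanish[OF \<open>r * w \<noteq> 0\<close>] by (simp only: mult_zero_right)
    finally show "(\<Sum>k\<in>I. C k * complex_of_real r ^ (i k + j k) * w ^ e k) = 0" .
  qed
  have "(\<Sum>k\<in>{k\<in>{k\<in>I. e k = e k0}. i k + j k = i k0 + j k0}. C k) = 0"
    using fin circle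
    by (intro grouped_coeffs_eq_0_if_infinite_roots[OF _ infinite_positive_reals]) auto
  moreover have "{k\<in>{k\<in>I. e k = e k0}. i k + j k = i k0 + j k0} = {k0}"
  proof -
    have "k = k0" if "k \<in> I" "e k = e k0" "i k + j k = i k0 + j k0" for k
    proof -
      have "i k = i k0 \<and> j k = j k0"
        using that i_le[OF that(1)] i_le[OF k0] by (simp add: e_def) linarith
      then show ?thesis
        using inj that(1) k0 by (auto simp: inj_on_def)
    qed
    then show ?thesis
      using k0 by auto
  qed
  ultimately show "C k0 = 0"
    by simp
qed

section \<open>Fock states\<close>

lemma fock_bij_lists:
  "bij_betw (\<lambda>mu. map mu [0..<K]) (fock N K) {xs. length xs = K \<and> sum_list xs = N}"
proof (rule bij_betw_imageI)
  show "inj_on (\<lambda>mu. map mu [0..<K]) (fock N K)"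
  proof (rule inj_onI, rule ext)
    fix mu nu l
    assume "mu \<in> fock N K" "nu \<in> fock N K" "map mu [0..<K] = map nu [0..<K]"
    then show "mu l = nu l"
      by (cases "l < K") (auto simp: fock_def dest: map_eq_conv[THEN iffD1])
  qed
  have sum_conv: "sum_list (map mu [0..<K]) = (\<Sum>j<K. mu j)" for mu :: "nat \<Rightarrow> nat"
    by (simp add: interv_sum_list_conv_sum_set_nat lessThan_atLeast0)
  show "(\<lambda>mu. map mu [0..<K]) ` fock N K = {xs. length xs = K \<and> sum_list xs = N}"
  proof (intro equalityI subsetI)
    fix xs
    assume xs: "xs \<in> {xs. length xs = K \<and> sum_list xs = N}"
    define mu where "mu i = (if i < K then xs ! i else 0)" for i
    have "map mu [0..<K] = xs"
      using xs by (intro nth_equalityI) (auto simp: mu_def)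
    moreover from this have "mu \<in> fock N K"
      using xs sum_conv[of mu] by (auto simp: fock_def mu_def)
    ultimately show "xs \<in> (\<lambda>mu. map mu [0..<K]) ` fock N K"
      by blast
  qed (auto simp: fock_def sum_conv)
qed

lemma finite_fock: "finite (fock N K)"
proof -
  have "{xs. length xs = K \<and> sum_list xs = N} \<subseteq> {xs. set xs \<subseteq> {0..N} \<and> length xs = K}"
    by (auto simp: member_le_sum_list)
  then have "finite {xs. length xs = K \<and> sum_list xs = N}"
    using finite_lists_length_eq[of "{0..N}" K] finite_subset by blast
  then show ?thesis
    using bij_betw_finite[OF fock_bij_lists] by blast
qed

lemma card_fock: "card (fock N K) = (N + K - 1) choose N"
  using bij_betw_same_card[OF fock_bij_lists] card_length_sum_list by simp

lemma fock_le: "mu \<in> fock N M \<Longrightarrow> mu l \<le> N"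
  by (cases "l < M") (auto simp: fock_def intro: member_le_sum[of l "{..<M}" mu, simplified])

lemma card_fock_strict_mono:
  assumes "N \<ge> 1" and "M < M'"
  shows "card (fock N M) < card (fock N M')"
proof (rule psubset_card_mono[OF finite_fock])
  have "fock N M \<subseteq> fock N M'"
  proof
    fix mu
    assume mu: "mu \<in> fock N M"
    then have "(\<Sum>j<M'. mu j) = (\<Sum>j<M. mu j)"
      using assms(2) by (intro sum.mono_neutral_right) (auto simp: fock_def)
    then show "mu \<in> fock N M'"
      using mu assms(2) by (simp add: fock_def)
  qed
  moreover have "(\<lambda>l. if l = M then N else 0) \<in> fock N M' - fock N M"
    using assms by (auto simp: fock_def)
  ultimately show "fock N M \<subset> fock N M'"
    by blast
qed

section \<open>The outcome with all photons in mode 0\<close>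

definition fock_mode0 :: "nat \<Rightarrow> nat \<Rightarrow> nat" where
  "fock_mode0 N = (\<lambda>l. if l = 0 then N else 0)"

definition photon_assignments :: "nat \<Rightarrow> nat \<Rightarrow> (nat \<Rightarrow> nat) \<Rightarrow> (nat \<Rightarrow> nat) set" where
  "photon_assignments N M mu = {f \<in> {0..<N} \<rightarrow>\<^sub>E {0..<M}. occ N f = mu}"

text \<open>Only the positivity of \<open>amp_weight\<close> matters below; its value is \<open>sqrt (N! / mu!)\<close>.\<close>

definition amp_weight :: "nat \<Rightarrow> nat \<Rightarrow> (nat \<Rightarrow> nat) \<Rightarrow> real" where
  "amp_weight N M mu = sqrt (fock_fact M mu) / sqrt (fact N) * card (photon_assignments N M mu)"

definition fock_monomial :: "nat \<Rightarrow> (nat \<Rightarrow> complex) \<Rightarrow> (nat \<Rightarrow> nat) \<Rightarrow> complex" where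
  "fock_monomial M x mu = (\<Prod>l<M. x l ^ mu l)"

lemma fock_mode0_in_fock: "M \<ge> 1 \<Longrightarrow> fock_mode0 N \<in> fock N M"
  by (auto simp: fock_def fock_mode0_def)

lemma mode_list_fock_mode0:
  assumes "M \<ge> 1"
  shows "mode_list M (fock_mode0 N) = replicate N 0"
proof -
  have "[0..<M] = 0 # [1..<M]"
    using assms by (simp add: upt_conv_Cons)
  moreover have "map (\<lambda>l. replicate (fock_mode0 N l) l) [1..<M] = map (\<lambda>l. []) [1..<M]"
    by (rule map_cong) (auto simp: fock_mode0_def)
  ultimately show ?thesis
    by (simp add: mode_list_def fock_mode0_def)
qed

lemma fock_fact_fock_mode0:
  assumes "M \<ge> 1"
  shows "fock_fact M (fock_mode0 N) = fact N"
proof -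
  have "fock_fact M (fock_mode0 N) = (\<Prod>l<M. if l = 0 then fact N else 1)"
    unfolding fock_fact_def by (rule prod.cong) (auto simp: fock_mode0_def)
  also have "\<dots> = fact N"
    using assms by (subst prod.delta) auto
  finally show ?thesis .
qed

lemma length_filter_mode_list:
  "length (filter (\<lambda>y. y = k) (mode_list M mu)) = (if k < M then mu k else 0)"
proof -
  have "length (filter (\<lambda>y. y = k) (replicate n l)) = (if l = k then n else 0)" for n l :: nat
    by (induction n) auto
  then have "length (filter (\<lambda>y. y = k) (mode_list M mu))
      = sum_list (map (\<lambda>l. if l = k then mu l else 0) [0..<M])"
    unfolding mode_list_def filter_concat length_concat map_map by (simp add: o_def)
  also have "\<dots> = (\<Sum>l\<in>{0..<M}. if l = k then mu l else 0)"
    by (simp add: interv_sum_list_conv_sum_set_nat)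
  finally show ?thesis
    by simp
qed

lemma length_mode_list: "length (mode_list M mu) = (\<Sum>l<M. mu l)"
  by (simp add: mode_list_def length_concat o_def interv_sum_list_conv_sum_set_nat
      lessThan_atLeast0)

lemma photon_assignments_nonempty:
  assumes mu: "mu \<in> fock N M"
  shows "photon_assignments N M mu \<noteq> {}"
proof -
  define L where "L = mode_list M mu"
  have len: "length L = N"
    using mu by (simp add: L_def length_mode_list fock_def)
  define f where "f j = (if j < N then L ! j else undefined)" for j
  have "L ! j \<in> {0..<M}" if "j < N" for j
    using that len nth_mem[of j L] by (auto simp: L_def mode_list_def)
  then have "f \<in> {0..<N} \<rightarrow>\<^sub>E {0..<M}"
    by (auto simp: f_def)
  moreover have "occ N f = mu"
  proof
    fix k
    have "occ N f k = card {j. j < length L \<and> L ! j = k}"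
      unfolding occ_def len by (rule arg_cong[where f = card]) (auto simp: f_def)
    also have "\<dots> = length (filter (\<lambda>y. y = k) L)"
      by (simp add: length_filter_conv_card)
    also have "\<dots> = mu k"
      using mu by (simp add: L_def length_filter_mode_list fock_def)
    finally show "occ N f k = mu k" .
  qed
  ultimately show ?thesis
    unfolding photon_assignments_def by blast
qed

lemma amp_weight_pos:
  assumes "mu \<in> fock N M"
  shows "amp_weight N M mu > 0"
proof -
  have "finite (photon_assignments N M mu)"
    unfolding photon_assignments_def by (simp add: finite_PiE)
  then have "card (photon_assignments N M mu) > 0"
    using photon_assignments_nonempty[OF assms] by (simp add: card_gt_0_iff)
  moreover have "fock_fact M mu > 0"
    unfolding fock_fact_def by (intro prod_pos) auto
  ultimately show ?thesis
    by (simp add: amp_weight_def)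
qed

lemma prod_photon_assignment:
  fixes h :: "nat \<Rightarrow> 'a::comm_monoid_mult"
  assumes f: "f \<in> photon_assignments N M mu"
  shows "(\<Prod>j<N. h (f j)) = (\<Prod>l<M. h l ^ mu l)"
proof -
  have "(\<Prod>j\<in>{0..<N}. h (f j)) = (\<Prod>l\<in>{0..<M}. \<Prod>j\<in>{j\<in>{0..<N}. f j = l}. h (f j))"
    using f by (intro prod.group[symmetric]) (auto simp: photon_assignments_def)
  also have "\<dots> = (\<Prod>l\<in>{0..<M}. h l ^ occ N f l)"
    by (intro prod.cong refl) (simp add: occ_def)
  finally show ?thesis
    using f by (simp add: photon_assignments_def lessThan_atLeast0)
qed

lemma fock_amp_fock_mode0:
  assumes "M \<ge> 1"
  shows "fock_amp N M g mu (fock_mode0 N) = amp_weight N M mu * fock_monomial M (\<lambda>l. g l 0) mu"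
proof -
  have "(\<Sum>f\<in>photon_assignments N M mu. \<Prod>j<N. g (f j) (mode_list M (fock_mode0 N) ! j))
      = (\<Sum>f\<in>photon_assignments N M mu. fock_monomial M (\<lambda>l. g l 0) mu)"
    using prod_photon_assignment[of _ N M mu "\<lambda>l. g l 0"]
    by (intro sum.cong refl) (simp add: mode_list_fock_mode0[OF assms] fock_monomial_def)
  then show ?thesis
    unfolding fock_amp_def amp_weight_def photon_assignments_def[symmetric]
      fock_fact_fock_mode0[OF assms]
    by (simp add: mult_ac)
qed

section \<open>Unitary matrices with a prescribed first column\<close>

lemma cnj_mult_self: "cnj z * z = (complex_of_real (cmod z))\<^sup>2"
  using complex_norm_square[of z] by (simp add: mult.commute)

lemma sum_delta_mult:
  fixes f :: "nat \<Rightarrow> complex"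
  assumes "i < M"
  shows "(\<Sum>k<M. (if k = i then 1 else 0) * f k) = f i"
  using assms by (simp add: if_distrib[of "\<lambda>a. a * _"] cong: if_cong)

text \<open>The Householder reflection \<open>1 - v v\<^sup>* / s\<close> with \<open>v = e\<^sub>0 - y\<close> and
  \<open>s = 1 - y\<^sub>0 = |v|\<^sup>2 / 2\<close> maps \<open>e\<^sub>0\<close> to \<open>y\<close>.\<close>

lemma unitary_mat_reflection_first_column:
  fixes y :: "nat \<Rightarrow> complex"
  assumes M: "M \<ge> 1" and unit: "(\<Sum>l<M. (cmod (y l))\<^sup>2) = 1"
    and im: "Im (y 0) = 0" and re: "Re (y 0) < 1"
  shows "\<exists>g. unitary_mat M g \<and> (\<forall>l<M. g l 0 = y l)"
proof -
  define s where "s = 1 - Re (y 0)"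
  have s: "complex_of_real s \<noteq> 0"
    using re by (simp add: s_def)
  define d :: "nat \<Rightarrow> nat \<Rightarrow> complex" where "d k l = (if k = l then 1 else 0)" for k l
  define v where "v l = d l 0 - y l" for l
  define g where "g k l = d k l - v k * cnj (v l) / complex_of_real s" for k l
  have y0: "y 0 = complex_of_real (Re (y 0))"
    using im by (simp add: complex_eq_iff)
  have v0: "v 0 = complex_of_real s"
    unfolding v_def d_def s_def by (subst y0) simp
  have "g l 0 = y l" for l
    unfolding g_def v0 using s by (simp add: v_def)
  moreover have "unitary_mat M g"
    unfolding unitary_mat_def
  proof (intro allI impI)
    fix i j
    assume i: "i < M" and j: "j < M"
    have norm_y: "(\<Sum>k<M. cnj (y k) * y k) = 1"
    proof -
      have "(\<Sum>k<M. cnj (y k) * y k) = complex_of_real (\<Sum>k<M. (cmod (y k))\<^sup>2)"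
        by (simp add: cnj_mult_self)
      then show ?thesis
        using unit by simp
    qed
    have norm_v: "(\<Sum>k<M. cnj (v k) * v k) = 2 * complex_of_real s"
    proof -
      have "(\<Sum>k<M. cnj (v k) * v k)
          = (\<Sum>k<M. d k 0 * 1) - (\<Sum>k<M. d k 0 * y k) - (\<Sum>k<M. d k 0 * cnj (y k))
            + (\<Sum>k<M. cnj (y k) * y k)"
        unfolding sum_subtractf[symmetric] sum.distrib[symmetric]
        by (rule sum.cong) (auto simp: v_def d_def algebra_simps)
      also have "\<dots> = 2 - y 0 - cnj (y 0)"
        using M norm_y sum_delta_mult[of 0 M "\<lambda>_. 1"] sum_delta_mult[of 0 M y]
          sum_delta_mult[of 0 M "\<lambda>k. cnj (y k)"]
        by (simp add: d_def)
      also have "\<dots> = 2 * complex_of_real s"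
        using im by (simp add: s_def complex_eq_iff)
      finally show ?thesis .
    qed
    have "(\<Sum>k<M. cnj (g k i) * g k j)
        = (\<Sum>k<M. d k i * d k j) - (\<Sum>k<M. d k i * (v k * cnj (v j) / s))
          - (\<Sum>k<M. d k j * (cnj (v k) * v i / s))
          + (v i * cnj (v j) / (s * s)) * (\<Sum>k<M. cnj (v k) * v k)"
      unfolding sum_subtractf[symmetric] sum.distrib[symmetric] sum_distrib_left
      using s by (intro sum.cong refl) (simp add: g_def d_def field_simps)
    also have "\<dots> = d i j - v i * cnj (v j) / s - cnj (v j) * v i / s
        + (v i * cnj (v j) / (s * s)) * (2 * s)"
      using sum_delta_mult[OF i, of "\<lambda>k. d k j"] sum_delta_mult[OF i, of "\<lambda>k. v k * cnj (v j) / s"]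
        sum_delta_mult[OF j, of "\<lambda>k. cnj (v k) * v i / s"]
      by (simp add: d_def norm_v)
    also have "\<dots> = d i j"
      using s by (simp add: field_simps)
    finally show "(\<Sum>k<M. cnj (g k i) * g k j) = (if i = j then 1 else 0)"
      by (simp add: d_def)
  qed
  ultimately show ?thesis
    by blast
qed

lemma unitary_mat_scale:
  assumes "cmod c = 1" and "unitary_mat M g"
  shows "unitary_mat M (\<lambda>k l. c * g k l)"
proof -
  have "cnj c * c = 1"
    using assms(1) by (simp add: cnj_mult_self)
  then have "(\<Sum>k<M. cnj (c * g k i) * (c * g k j)) = (\<Sum>k<M. cnj (g k i) * g k j)" for i j
    by (simp add: sum_distrib_left[symmetric] mult_ac)
  then show ?thesis
    using assms(2) by (simp add: unitary_mat_def)
qed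

lemma unitary_mat_first_column:
  fixes y :: "nat \<Rightarrow> complex"
  assumes M: "M \<ge> 1" and unit: "(\<Sum>l<M. (cmod (y l))\<^sup>2) = 1"
  shows "\<exists>g. unitary_mat M g \<and> (\<forall>l<M. g l 0 = y l)"
proof -
  define c where "c = (if y 0 = 0 then 1 else - cnj (sgn (y 0)))"
  have c: "cmod c = 1"
    by (simp add: c_def norm_sgn)
  have c_y0: "c * y 0 = - complex_of_real (cmod (y 0))"
    by (simp add: c_def sgn_eq cnj_mult_self power2_eq_square)
  have "(\<Sum>l<M. (cmod (c * y l))\<^sup>2) = 1"
    using unit c by (simp add: norm_mult)
  moreover have "Re (c * y 0) < 1"
    using c_y0 norm_ge_zero[of "y 0"] by (simp del: norm_ge_zero)
  moreover have "Im (c * y 0) = 0"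
    using c_y0 by simp
  ultimately obtain h where h: "unitary_mat M h" "\<forall>l<M. h l 0 = c * y l"
    using unitary_mat_reflection_first_column[OF M, of "\<lambda>l. c * y l"] by auto
  have "cnj c * c = 1"
    using c by (simp add: cnj_mult_self)
  then have "\<forall>l<M. cnj c * h l 0 = y l"
    using h(2) by (simp add: mult.assoc[symmetric])
  moreover have "unitary_mat M (\<lambda>k l. cnj c * h k l)"
    using c h(1) by (intro unitary_mat_scale) simp_all
  ultimately show ?thesis
    by blast
qed

section \<open>Recovering a state from its mode-0 outcome probabilities\<close>

definition mode0_form ::
  "nat \<Rightarrow> nat \<Rightarrow> ((nat \<Rightarrow> nat) \<Rightarrow> (nat \<Rightarrow> nat) \<Rightarrow> complex) \<Rightarrow> (nat \<Rightarrow> complex) \<Rightarrow> complex" where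
  "mode0_form N M D x = (\<Sum>mu\<in>fock N M. \<Sum>mu'\<in>fock N M.
      complex_of_real (amp_weight N M mu * amp_weight N M mu') *
      cnj (fock_monomial M x mu) * D mu mu' * fock_monomial M x mu')"

lemma outcome_prob_fock_mode0:
  assumes "M \<ge> 1"
  shows "outcome_prob N M D g (fock_mode0 N) = mode0_form N M D (\<lambda>l. g l 0)"
  unfolding outcome_prob_def mode0_form_def fock_amp_fock_mode0[OF assms]
  by (intro sum.cong refl) (simp add: mult_ac)

lemma mode0_form_cong:
  assumes "\<forall>l<M. x l = x' l"
  shows "mode0_form N M D x = mode0_form N M D x'"
proof -
  have "fock_monomial M x = fock_monomial M x'"
    using assms by (auto simp: fock_monomial_def intro!: prod.cong)
  then show ?thesis
    by (simp add: mode0_form_def)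
qed

lemma mode0_form_scale:
  "mode0_form N M D (\<lambda>l. c * x l) = complex_of_real (cmod c ^ (2 * N)) * mode0_form N M D x"
proof -
  have monomial: "fock_monomial M (\<lambda>l. c * x l) mu = c ^ N * fock_monomial M x mu"
    if "mu \<in> fock N M" for mu
  proof -
    have "fock_monomial M (\<lambda>l. c * x l) mu = c ^ (\<Sum>l<M. mu l) * fock_monomial M x mu"
      by (simp add: fock_monomial_def power_mult_distrib prod.distrib power_sum)
    then show ?thesis
      using that by (simp add: fock_def)
  qed
  have "cnj (c ^ N) * c ^ N = (cnj c * c) ^ N"
    by (simp add: power_mult_distrib)
  also have "\<dots> = complex_of_real (cmod c ^ (2 * N))"
    by (simp add: cnj_mult_self power_mult)
  finally have "cnj (c ^ N) * c ^ N = complex_of_real (cmod c ^ (2 * N))" .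
  then show ?thesis
    unfolding mode0_form_def sum_distrib_left
    by (intro sum.cong refl) (simp add: monomial mult_ac)
qed

lemma mode0_form_eq_0:
  assumes M: "M \<ge> 1"
    and unitary: "\<And>g. unitary_mat M g \<Longrightarrow> mode0_form N M D (\<lambda>l. g l 0) = 0"
    and nonzero: "\<exists>l<M. x l \<noteq> 0"
  shows "mode0_form N M D x = 0"
proof -
  define r where "r = sqrt (\<Sum>l<M. (cmod (x l))\<^sup>2)"
  obtain l where "l < M" "x l \<noteq> 0"
    using nonzero by blast
  then have "(\<Sum>l<M. (cmod (x l))\<^sup>2) > 0"
    by (intro sum_pos2[of _ l]) auto
  then have r: "r > 0" and r2: "r\<^sup>2 = (\<Sum>l<M. (cmod (x l))\<^sup>2)"
    by (simp_all add: r_def)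
  define c where "c = complex_of_real (1 / r)"
  have "(\<Sum>l<M. (cmod (c * x l))\<^sup>2) = (\<Sum>l<M. (cmod (x l))\<^sup>2) / r\<^sup>2"
    using r by (simp add: c_def norm_divide power_divide sum_divide_distrib)
  then have "(\<Sum>l<M. (cmod (c * x l))\<^sup>2) = 1"
    unfolding r2[symmetric] using r by simp
  then obtain g where "unitary_mat M g" "\<forall>l<M. g l 0 = c * x l"
    using unitary_mat_first_column[OF M, of "\<lambda>l. c * x l"] by blast
  then have "mode0_form N M D (\<lambda>l. c * x l) = 0"
    using unitary mode0_form_cong[of M "\<lambda>l. g l 0"] by metis
  moreover have "c \<noteq> 0"
    using r by (simp add: c_def)
  ultimately show ?thesis
    by (simp add: mode0_form_scale)
qed

lemma base_expansion_inj:
  fixes a b :: "nat \<Rightarrow> nat"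
  assumes "\<forall>l<M. a l < B" and "\<forall>l<M. b l < B"
    and "(\<Sum>l<M. a l * B ^ l) = (\<Sum>l<M. b l * B ^ l)"
  shows "\<forall>l<M. a l = b l"
  using assms
proof (induction M arbitrary: a b)
  case 0
  then show ?case by simp
next
  case (Suc M)
  have shift: "(\<Sum>l<Suc M. f l * B ^ l) = f 0 + B * (\<Sum>l<M. f (Suc l) * B ^ l)"
    for f :: "nat \<Rightarrow> nat"
    unfolding sum.lessThan_Suc_shift by (simp add: sum_distrib_left mult_ac del: sum.lessThan_Suc)
  have a0: "a 0 < B" and b0: "b 0 < B"
    using Suc.prems by auto
  have eq: "a 0 + B * (\<Sum>l<M. a (Suc l) * B ^ l) = b 0 + B * (\<Sum>l<M. b (Suc l) * B ^ l)"
    using Suc.prems(3) unfolding shift .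
  then have "a 0 = b 0"
    using a0 b0 by (metis mod_mult_self2 mod_less)
  moreover have "(\<Sum>l<M. a (Suc l) * B ^ l) = (\<Sum>l<M. b (Suc l) * B ^ l)"
    using eq \<open>a 0 = b 0\<close> a0 by simp
  then have "\<forall>l<M. a (Suc l) = b (Suc l)"
    using Suc.prems(1,2) by (intro Suc.IH) auto
  ultimately show ?case
    by (auto simp: less_Suc_eq_0_disj)
qed

text \<open>Polarization: along the curve \<open>x\<^sub>l = z ^ (N + 1) ^ l\<close> every Fock state
  \<open>mu\<close> contributes the monomial \<open>z ^ a mu\<close>, where \<open>a mu\<close> has the digits \<open>mu\<^sub>l \<le> N\<close> in
  base \<open>N + 1\<close>, so distinct pairs of Fock states give distinct monomials in \<open>cnj z, z\<close>.\<close>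

lemma coeff_eq_0_if_mode0_form_vanishes:
  assumes vanish: "\<And>z. z \<noteq> 0 \<Longrightarrow> mode0_form N M D (\<lambda>l. z ^ (Suc N ^ l)) = 0"
    and mu: "mu \<in> fock N M" and mu': "mu' \<in> fock N M"
  shows "D mu mu' = 0"
proof -
  define F where "F = fock N M"
  define a where "a mu = (\<Sum>l<M. mu l * Suc N ^ l)" for mu :: "nat \<Rightarrow> nat"
  define C where "C p = complex_of_real (amp_weight N M (fst p) * amp_weight N M (snd p))
    * D (fst p) (snd p)" for p
  have monomial: "fock_monomial M (\<lambda>l. z ^ (Suc N ^ l)) mu = z ^ a mu" for z mu
    unfolding fock_monomial_def a_def power_sum
    by (intro prod.cong refl) (simp add: power_mult[symmetric] mult.commute)
  have a_inj: "inj_on a F"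
  proof (rule inj_onI, rule ext)
    fix mu1 mu2 l
    assume "mu1 \<in> F" "mu2 \<in> F" "a mu1 = a mu2"
    then have "\<forall>l<M. mu1 l = mu2 l"
      by (intro base_expansion_inj) (auto simp: a_def F_def less_Suc_eq_le fock_le)
    then show "mu1 l = mu2 l"
      using \<open>mu1 \<in> F\<close> \<open>mu2 \<in> F\<close> by (cases "l < M") (auto simp: F_def fock_def)
  qed
  have "C (mu, mu') = 0"
  proof (rule coeffs_eq_0_if_sum_cnj_pow_pow_eq_0[where C = C and I = "F \<times> F"
        and i = "\<lambda>p. a (fst p)" and j = "\<lambda>p. a (snd p)"])
    show "finite (F \<times> F)"
      by (simp add: F_def finite_fock)
    show "inj_on (\<lambda>p. (a (fst p), a (snd p))) (F \<times> F)"
      using a_inj by (auto simp: inj_on_def)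
    show "(\<Sum>p\<in>F \<times> F. C p * cnj z ^ a (fst p) * z ^ a (snd p)) = 0" if "z \<noteq> 0" for z
    proof -
      have "mode0_form N M D (\<lambda>l. z ^ (Suc N ^ l))
          = (\<Sum>p\<in>F \<times> F. C p * cnj z ^ a (fst p) * z ^ a (snd p))"
        unfolding mode0_form_def monomial F_def[symmetric] sum.cartesian_product
        by (intro sum.cong refl) (simp add: C_def case_prod_unfold)
      then show ?thesis
        using vanish[OF that] by simp
    qed
    show "(mu, mu') \<in> F \<times> F"
      using mu mu' by (simp add: F_def)
  qed
  then show ?thesis
    using amp_weight_pos[OF mu] amp_weight_pos[OF mu'] by (simp add: C_def)
qed

lemma fock_mode0_outcomes_determine_state:
  assumes M: "M \<ge> 1"
    and outcomes: "\<And>g. unitary_mat M g \<Longrightarrow> outcome_prob N M D g (fock_mode0 N) = 0"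
    and "mu \<in> fock N M" and "mu' \<in> fock N M"
  shows "D mu mu' = 0"
proof (rule coeff_eq_0_if_mode0_form_vanishes[where D = D])
  fix z :: complex
  assume "z \<noteq> 0"
  have "mode0_form N M D (\<lambda>l. g l 0) = 0" if "unitary_mat M g" for g
    using outcomes[OF that] by (simp add: outcome_prob_fock_mode0[OF M])
  moreover have "\<exists>l<M. z ^ (Suc N ^ l) \<noteq> 0"
    using M \<open>z \<noteq> 0\<close> by (intro exI[of _ 0]) simp
  ultimately show "mode0_form N M D (\<lambda>l. z ^ (Suc N ^ l)) = 0"
    by (rule mode0_form_eq_0[OF M])
qed fact+

section \<open>Finitely many configurations suffice\<close>

lemma sum_fun_apply: "(\<Sum>i\<in>A. f i) x = (\<Sum>i\<in>A. f i x)"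
  by (induction A rule: infinite_finite_induct) auto

lemma small_subfamily_determines_linear_forms:
  fixes w :: "'g \<Rightarrow> 'p \<Rightarrow> complex"
  assumes P: "finite P"
  shows "\<exists>hs. set hs \<subseteq> G \<and> length hs \<le> card P \<and>
    (\<forall>c. (\<forall>h\<in>set hs. (\<Sum>p\<in>P. w h p * c p) = 0) \<longrightarrow> (\<forall>g\<in>G. (\<Sum>p\<in>P. w g p * c p) = 0))"
proof -
  interpret V: vector_space "\<lambda>(a::complex) (f::'p \<Rightarrow> complex) x. a * f x"
    by unfold_locales (simp_all add: fun_eq_iff algebra_simps)
  define v where "v g p = (if p \<in> P then w g p else 0)" for g p
  obtain B where B: "B \<subseteq> v ` G" "V.independent B" "v ` G \<subseteq> V.span B"
    using V.maximal_independent_subset by blast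
  define E where "E = (\<lambda>p q. if q = p then 1 else 0 :: complex) ` P"
  have "v g \<in> V.span E" for g
  proof -
    have "v g = (\<Sum>p\<in>P. (\<lambda>q. v g p * (if q = p then 1 else 0)))"
      using P by (auto simp: sum_fun_apply v_def if_distrib[of "\<lambda>a. _ * a"] cong: if_cong)
    also have "\<dots> \<in> V.span E"
      by (intro V.span_sum V.span_scale V.span_base) (auto simp: E_def)
    finally show ?thesis .
  qed
  then have "finite B \<and> card B \<le> card E"
    using B by (intro V.independent_span_bound) (auto simp: E_def P)
  moreover have "card E \<le> card P"
    unfolding E_def using P by (rule card_image_le)
  moreover obtain bs where bs: "set bs = B" "distinct bs"
    using calculation finite_distinct_list by blast
  define hs where "hs = map (inv_into G v) bs"
  ultimately have "set hs \<subseteq> G" "length hs \<le> card P"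
    using B(1) bs by (auto simp: hs_def inv_into_into distinct_card[symmetric])
  moreover have "(\<Sum>p\<in>P. w g p * c p) = 0"
    if hs_tests: "\<forall>h\<in>set hs. (\<Sum>p\<in>P. w h p * c p) = 0" and "g \<in> G" for c g
  proof -
    define L where "L f = (\<Sum>p\<in>P. f p * c p)" for f :: "'p \<Rightarrow> complex"
    have L_v: "L (v g) = (\<Sum>p\<in>P. w g p * c p)" for g
      unfolding L_def v_def by (intro sum.cong refl) simp
    have "L 0 = 0" "L (f + f') = L f + L f'" "L (\<lambda>x. a * f x) = a * L f" for f f' a
      by (simp_all add: L_def sum.distrib distrib_right sum_distrib_left mult.assoc)
    then have "V.subspace {f. L f = 0}"
      by (simp add: V.subspace_def)
    moreover have "B \<subseteq> {f. L f = 0}"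
    proof
      fix b
      assume "b \<in> B"
      then have b_eq: "v (inv_into G v b) = b" and "inv_into G v b \<in> set hs"
        using B(1) bs(1) by (auto simp: hs_def f_inv_into_f)
      then have "L (v (inv_into G v b)) = 0"
        unfolding L_v using hs_tests by blast
      then show "b \<in> {f. L f = 0}"
        unfolding b_eq by simp
    qed
    ultimately have "V.span B \<subseteq> {f. L f = 0}"
      by (rule V.span_minimal[rotated])
    moreover have "v g \<in> V.span B"
      using B(3) \<open>g \<in> G\<close> by blast
    ultimately have "L (v g) = 0"
      by blast
    then show ?thesis
      by (simp only: L_v)
  qed
  ultimately show ?thesis
    by blast
qed

lemma density_op_eqI:
  assumes \<rho>1: "density_op N M \<rho>1" and \<rho>2: "density_op N M \<rho>2"
    and eq: "\<And>mu mu'. mu \<in> fock N M \<Longrightarrow> mu' \<in> fock N M \<Longrightarrow> \<rho>1 mu mu' = \<rho>2 mu mu'"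
  shows "\<rho>1 = \<rho>2"
proof (intro ext)
  fix mu mu'
  show "\<rho>1 mu mu' = \<rho>2 mu mu'"
  proof (cases "mu \<in> fock N M \<and> mu' \<in> fock N M")
    case False
    then have "\<rho>1 mu mu' = 0" and "\<rho>2 mu mu' = 0"
      using \<rho>1 \<rho>2 unfolding density_op_def by blast+
    then show ?thesis
      by simp
  qed (use eq in blast)
qed

lemma fock_single_mode: "fock N 1 = {fock_mode0 N}"
proof (intro equalityI subsetI)
  fix mu
  assume "mu \<in> fock N 1"
  then have "mu l = fock_mode0 N l" for l
    by (cases l) (simp_all add: fock_def fock_mode0_def)
  then show "mu \<in> {fock_mode0 N}"
    by auto
qed (simp add: fock_mode0_in_fock)

lemma reconstructs_single_mode: "reconstructs N 1 []"
  unfolding reconstructs_def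
proof (intro allI impI)
  fix \<rho>1 \<rho>2
  assume \<rho>: "density_op N 1 \<rho>1" "density_op N 1 \<rho>2"
  have trace: "\<rho> (fock_mode0 N) (fock_mode0 N) = 1" if "density_op N 1 \<rho>" for \<rho>
  proof -
    have "(\<Sum>mu\<in>fock N 1. \<rho> mu mu) = 1"
      using that unfolding density_op_def by blast
    then show ?thesis
      unfolding fock_single_mode by simp
  qed
  show "\<rho>1 = \<rho>2"
    using \<rho> by (rule density_op_eqI)
      (unfold fock_single_mode, simp add: trace[OF \<rho>(1)] trace[OF \<rho>(2)])
qed

lemma outcome_prob_diff:
  "outcome_prob N M (\<lambda>mu mu'. \<rho>1 mu mu' - \<rho>2 mu mu') g nu
    = outcome_prob N M \<rho>1 g nu - outcome_prob N M \<rho>2 g nu"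
  unfolding outcome_prob_def by (simp add: algebra_simps sum_subtractf)

lemma reconstructs_if_tests_determine_mode0_outcomes:
  assumes M: "M \<ge> 1"
    and tests: "\<And>D g. \<forall>h\<in>set gs. outcome_prob N M D h (fock_mode0 N) = 0 \<Longrightarrow> unitary_mat M g
      \<Longrightarrow> outcome_prob N M D g (fock_mode0 N) = 0"
  shows "reconstructs N M gs"
  unfolding reconstructs_def
proof (intro allI impI)
  fix \<rho>1 \<rho>2
  assume \<rho>: "density_op N M \<rho>1" "density_op N M \<rho>2"
    and same: "\<forall>j<length gs. \<forall>nu\<in>fock N M. outcome_prob N M \<rho>1 (gs ! j) nu = outcome_prob N M \<rho>2 (gs ! j) nu"
  define D where "D = (\<lambda>mu mu'. \<rho>1 mu mu' - \<rho>2 mu mu')"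
  have "\<forall>h\<in>set gs. outcome_prob N M D h (fock_mode0 N) = 0"
    using same fock_mode0_in_fock[OF M, of N]
    by (auto simp: D_def outcome_prob_diff in_set_conv_nth)
  then have "outcome_prob N M D g (fock_mode0 N) = 0" if "unitary_mat M g" for g
    using that by (rule tests)
  then have "D mu mu' = 0" if "mu \<in> fock N M" "mu' \<in> fock N M" for mu mu'
    using fock_mode0_outcomes_determine_state[OF M _ that] by blast
  then show "\<rho>1 = \<rho>2"
    using \<rho> by (intro density_op_eqI) (auto simp: D_def)
qed

lemma reconstructs_with_few_unitaries:
  assumes M: "M \<ge> 1"
  shows "\<exists>gs. (\<forall>g\<in>set gs. unitary_mat M g) \<and> length gs \<le> (card (fock N M))\<^sup>2 \<and>
    reconstructs N M gs"
proof -
  define F where "F = fock N M"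
  define amp where "amp g mu = fock_amp N M g mu (fock_mode0 N)" for g mu
  have outcome_sum: "outcome_prob N M D g (fock_mode0 N)
      = (\<Sum>p\<in>F \<times> F. cnj (amp g (fst p)) * amp g (snd p) * D (fst p) (snd p))" for D g
    unfolding outcome_prob_def amp_def F_def sum.cartesian_product
    by (intro sum.cong refl) (simp add: case_prod_unfold mult_ac)
  obtain gs where gs: "set gs \<subseteq> {g. unitary_mat M g}" "length gs \<le> card (F \<times> F)"
    and determines: "\<And>c. \<forall>h\<in>set gs. (\<Sum>p\<in>F \<times> F. cnj (amp h (fst p)) * amp h (snd p) * c p) = 0
      \<Longrightarrow> \<forall>g\<in>{g. unitary_mat M g}. (\<Sum>p\<in>F \<times> F. cnj (amp g (fst p)) * amp g (snd p) * c p) = 0"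
    using small_subfamily_determines_linear_forms[of "F \<times> F" "{g. unitary_mat M g}"
        "\<lambda>g p. cnj (amp g (fst p)) * amp g (snd p)"]
    by (auto simp: F_def finite_fock)
  have "reconstructs N M gs"
    using M by (rule reconstructs_if_tests_determine_mode0_outcomes)
      (use determines in \<open>simp add: outcome_sum\<close>)
  moreover have "card (F \<times> F) = (card (fock N M))\<^sup>2"
    by (simp add: F_def card_cartesian_product power2_eq_square)
  ultimately show ?thesis
    using gs by auto
qed

theorem theorem1:
  fixes N M :: nat
  assumes "N \<ge> 1" and "M \<ge> 1"
  shows "\<exists>gs :: (nat \<Rightarrow> nat \<Rightarrow> complex) list.
           (\<forall>g\<in>set gs. unitary_mat M g) \<and>
           length gs < ((N + M^2 - 1) choose N)^2 \<and>
           reconstructs N M gs"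
proof (cases "M = 1")
  case True
  then show ?thesis
    using reconstructs_single_mode[of N] by (intro exI[of _ "[]"]) auto
next
  case False
  then have "M < M^2"
    using assms(2) by (simp add: power2_eq_square)
  then have "(card (fock N M))\<^sup>2 < ((N + M^2 - 1) choose N)^2"
    using card_fock_strict_mono[OF assms(1)] card_fock by (simp add: power_strict_mono)
  moreover obtain gs where "\<forall>g\<in>set gs. unitary_mat M g" "length gs \<le> (card (fock N M))\<^sup>2"
    "reconstructs N M gs"
    using reconstructs_with_few_unitaries[OF assms(2)] by blast
  ultimately show ?thesis
    by (meson le_less_trans)
qed

end
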